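(* Let $A$ be a commutative $\mathbb{N}$-graded ring generated as an $A_0$-algebra by homogeneous elements $x_1,\dots,x_n$ of positive degrees $\omega_1,\dots,\omega_n$, and let $w=\mathrm{lcm}(\omega_1,\dots,\omega_n)$. Let $k$ be a positive integer and $I=A_{\ge kw}$. If $I^p=A_{\ge pkw}$ for all integers $p$ with $1\le p\le \frac{n-2}{k}+1$, then $I^p=A_{\ge pkw}$ for all $p\ge 1$. In particular, if $k\ge n-1$, then $I^p=A_{\ge pkw}$ for all $p\ge1$.
   Context: For an $\mathbb{N}$-graded ring $A$ and a positive integer $m$, $A_{\ge m}=\bigoplus_{j\ge m}A_j$. *)

theory Defs
  imports Complex_Main
begin

definition graded_ring :: "(nat \<Rightarrow> 'a::comm_ring_1 set) \<Rightarrow> bool" where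
  "graded_ring G \<longleftrightarrow>
     (\<forall>i. 0 \<in> G i \<and> (\<forall>x\<in>G i. \<forall>y\<in>G i. x + y \<in> G i \<and> - x \<in> G i)) \<and>
     (\<forall>i j. \<forall>x\<in>G i. \<forall>y\<in>G j. x * y \<in> G (i + j)) \<and>
     1 \<in> G 0 \<and>
     (\<forall>a. \<exists>!c. (\<forall>i. c i \<in> G i) \<and> finite {i. c i \<noteq> 0} \<and>
                 a = (\<Sum>i\<in>{i. c i \<noteq> 0}. c i))"

definition graded_ge :: "(nat \<Rightarrow> 'a::comm_ring_1 set) \<Rightarrow> nat \<Rightarrow> 'a set" where
  "graded_ge G m = {a. \<exists>c. (\<forall>i. c i \<in> G i) \<and> finite {i. c i \<noteq> 0} \<and>
                          (\<forall>i<m. c i = 0) \<and> a = (\<Sum>i\<in>{i. c i \<noteq> 0}. c i)}"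

definition ideal_pow :: "'a::comm_ring_1 set \<Rightarrow> nat \<Rightarrow> 'a set" where
  "ideal_pow I p = {(\<Sum>k<m. \<Prod>j<p. f k j) | (m::nat) (f::nat \<Rightarrow> nat \<Rightarrow> 'a). \<forall>k<m. \<forall>j<p. f k j \<in> I}"

definition generated_by :: "(nat \<Rightarrow> 'a::comm_ring_1 set) \<Rightarrow> nat \<Rightarrow> (nat \<Rightarrow> 'a) \<Rightarrow> bool" where
  "generated_by G n x \<longleftrightarrow>
     (\<forall>a. \<exists>(m::nat) (c::nat \<Rightarrow> 'a) (e::nat \<Rightarrow> nat \<Rightarrow> nat). (\<forall>k<m. c k \<in> G 0) \<and>
                  a = (\<Sum>k<m. c k * (\<Prod>i<n. x i ^ e k i)))"

end

theory Submission
  imports Defs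
begin

text \<open>Every homogeneous element of A is an A_0-combination of monomials x^e of the same
  weighted degree.  Since x_i^(w / \<omega>_i) has degree w, a monomial of degree at least
  (k + n - 1) w contains a submonomial of degree exactly k w, which lies in I.  So if
  n \<le> p k + 1 and I^p = A_{\<ge> p k w}, every monomial of degree at least (p + 1) k w is an
  element of I times an element of A_{\<ge> p k w} = I^p, whence I^(p+1) = A_{\<ge> (p+1) k w}.
  Induction on p, starting from the powers with p \<le> (n - 2) / k + 1, gives all p.\<close>

lemma sum_lessThan_add:
  fixes f :: "nat \<Rightarrow> 'a::comm_monoid_add"
  shows "(\<Sum>i<m + m'. f i) = (\<Sum>i<m. f i) + (\<Sum>i<m'. f (m + i))"
  by (induction m') (simp_all add: add.assoc)

lemma ideal_pow_zero: "0 \<in> ideal_pow I p"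
  unfolding ideal_pow_def by (auto intro!: exI[of _ 0])

lemma ideal_pow_add:
  assumes "a \<in> ideal_pow I p" and "b \<in> ideal_pow I p"
  shows "a + b \<in> ideal_pow I p"
proof -
  obtain m :: nat and f where a: "a = (\<Sum>j<m. \<Prod>i<p. f j i)" and f: "\<forall>j<m. \<forall>i<p. f j i \<in> I"
    using assms(1) unfolding ideal_pow_def by blast
  obtain m' :: nat and f' where b: "b = (\<Sum>j<m'. \<Prod>i<p. f' j i)" and f': "\<forall>j<m'. \<forall>i<p. f' j i \<in> I"
    using assms(2) unfolding ideal_pow_def by blast
  define g where "g j = (if j < m then f j else f' (j - m))" for j
  have "a + b = (\<Sum>j<m + m'. \<Prod>i<p. g j i)"
    unfolding a b g_def sum_lessThan_add by simp
  moreover have "\<forall>j<m + m'. \<forall>i<p. g j i \<in> I"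
    using f f' unfolding g_def by auto
  ultimately show ?thesis
    unfolding ideal_pow_def by blast
qed

lemma ideal_pow_sum:
  "finite S \<Longrightarrow> (\<And>j. j \<in> S \<Longrightarrow> t j \<in> ideal_pow I p) \<Longrightarrow> sum t S \<in> ideal_pow I p"
  by (induction S rule: finite_induct) (auto intro: ideal_pow_zero ideal_pow_add)

lemma ideal_pow_mult:
  assumes a: "a \<in> I" and b: "b \<in> ideal_pow I p"
  shows "a * b \<in> ideal_pow I (Suc p)"
proof -
  obtain m :: nat and f where b_eq: "b = (\<Sum>j<m. \<Prod>i<p. f j i)" and f: "\<forall>j<m. \<forall>i<p. f j i \<in> I"
    using b unfolding ideal_pow_def by blast
  define g where "g j i = (if i = p then a else f j i)" for j i
  have "a * b = (\<Sum>j<m. \<Prod>i<Suc p. g j i)"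
    unfolding b_eq g_def by (simp add: sum_distrib_left mult.commute)
  moreover have "\<forall>j<m. \<forall>i<Suc p. g j i \<in> I"
    using f a unfolding g_def by (auto simp: less_Suc_eq)
  ultimately show ?thesis
    unfolding ideal_pow_def by blast
qed

lemma subset_ideal_pow_1: "I \<subseteq> ideal_pow I 1"
  unfolding ideal_pow_def by (force intro!: exI[of _ 1])

lemma graded_ge_induct [consumes 1, case_names zero homogeneous add]:
  assumes "a \<in> graded_ge G m"
    and "P 0"
    and "\<And>g i. g \<in> G i \<Longrightarrow> m \<le> i \<Longrightarrow> P g"
    and "\<And>a b. P a \<Longrightarrow> P b \<Longrightarrow> P (a + b)"
  shows "P a"
proof -
  obtain c where c: "\<forall>i. c i \<in> G i" "finite {i. c i \<noteq> 0}" "\<forall>i<m. c i = 0"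
    and a: "a = (\<Sum>i | c i \<noteq> 0. c i)"
    using assms(1) unfolding graded_ge_def by blast
  have "P (\<Sum>i\<in>S. c i)" if "finite S" "S \<subseteq> {i. c i \<noteq> 0}" for S
    using that by (induction S rule: finite_induct) (use c in \<open>auto intro!: assms(2-4) simp: not_less\<close>)
  then show ?thesis
    using a c(2) by blast
qed

locale graded =
  fixes G :: "nat \<Rightarrow> 'a::comm_ring_1 set"
  assumes graded_ring: "graded_ring G"
begin

lemma zero_mem [simp]: "0 \<in> G i"
  using graded_ring unfolding graded_ring_def by blast

lemma add_mem: "a \<in> G i \<Longrightarrow> b \<in> G i \<Longrightarrow> a + b \<in> G i"
  using graded_ring unfolding graded_ring_def by blast

lemma mult_mem: "a \<in> G i \<Longrightarrow> b \<in> G j \<Longrightarrow> a * b \<in> G (i + j)"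
  using graded_ring unfolding graded_ring_def by blast

lemma one_mem: "1 \<in> G 0"
  using graded_ring unfolding graded_ring_def by blast

lemma sum_mem: "finite S \<Longrightarrow> (\<And>j. j \<in> S \<Longrightarrow> t j \<in> G i) \<Longrightarrow> sum t S \<in> G i"
  by (induction S rule: finite_induct) (auto intro: add_mem)

lemma power_mem: "a \<in> G i \<Longrightarrow> a ^ k \<in> G (k * i)"
  by (induction k) (auto simp: one_mem dest: mult_mem)

lemma prod_mem:
  "finite S \<Longrightarrow> (\<And>j. j \<in> S \<Longrightarrow> t j \<in> G (deg j)) \<Longrightarrow> prod t S \<in> G (\<Sum>j\<in>S. deg j)"
  by (induction S rule: finite_induct) (auto simp: one_mem dest: mult_mem)

lemma decomposition_unique:
  assumes "\<forall>i. c i \<in> G i" "finite {i. c i \<noteq> 0}"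
    and "\<forall>i. c' i \<in> G i" "finite {i. c' i \<noteq> 0}"
    and "(\<Sum>i | c i \<noteq> 0. c i) = (\<Sum>i | c' i \<noteq> 0. c' i)"
  shows "c = c'"
  using graded_ring assms unfolding graded_ring_def by metis

lemma homogeneous_decomposition:
  assumes "g \<in> G d"
  defines "c \<equiv> \<lambda>i. if i = d then g else 0"
  shows "\<forall>i. c i \<in> G i" "finite {i. c i \<noteq> 0}" "g = (\<Sum>i | c i \<noteq> 0. c i)"
proof -
  show "\<forall>i. c i \<in> G i" "finite {i. c i \<noteq> 0}"
    using assms(1) unfolding c_def by (auto intro: finite_subset[of _ "{d}"])
  show "g = (\<Sum>i | c i \<noteq> 0. c i)"
    unfolding c_def by (cases "g = 0") auto
qed

lemma homogeneous_component_of_sum: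
  assumes S: "finite S" and t: "\<And>j. j \<in> S \<Longrightarrow> t j \<in> G (deg j)"
    and g: "g \<in> G d" "g = (\<Sum>j\<in>S. t j)"
  shows "g = (\<Sum>j | j \<in> S \<and> deg j = d. t j)"
proof -
  define c where "c i = (\<Sum>j | j \<in> S \<and> deg j = i. t j)" for i
  have c_mem: "\<forall>i. c i \<in> G i"
    unfolding c_def using S t by (auto intro: sum_mem)
  have supp: "{i. c i \<noteq> 0} \<subseteq> deg ` S"
    unfolding c_def by (fastforce dest: sum.not_neutral_contains_not_neutral)
  have "(\<Sum>i | c i \<noteq> 0. c i) = (\<Sum>i\<in>deg ` S. c i)"
    using S supp by (intro sum.mono_neutral_left) auto
  also have "\<dots> = g"
    unfolding c_def g(2) using S by (intro sum.group) auto
  finally have "c = (\<lambda>i. if i = d then g else 0)"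
    using homogeneous_decomposition[OF g(1)] supp S c_mem
    by (intro decomposition_unique) (auto intro: finite_subset)
  then show ?thesis
    unfolding c_def by (metis (mono_tags, lifting))
qed

lemma homogeneous_mem_graded_ge: "g \<in> G i \<Longrightarrow> m \<le> i \<Longrightarrow> g \<in> graded_ge G m"
  unfolding graded_ge_def using homogeneous_decomposition[of g i] by fastforce

lemma graded_ge_zero: "0 \<in> graded_ge G m"
  by (rule homogeneous_mem_graded_ge[OF zero_mem order_refl])

lemma graded_ge_add:
  assumes "a \<in> graded_ge G m" and "b \<in> graded_ge G m"
  shows "a + b \<in> graded_ge G m"
proof -
  obtain c where c: "\<forall>i. c i \<in> G i" "finite {i. c i \<noteq> 0}" "\<forall>i<m. c i = 0"
    and a: "a = (\<Sum>i | c i \<noteq> 0. c i)"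
    using assms(1) unfolding graded_ge_def by blast
  obtain c' where c': "\<forall>i. c' i \<in> G i" "finite {i. c' i \<noteq> 0}" "\<forall>i<m. c' i = 0"
    and b: "b = (\<Sum>i | c' i \<noteq> 0. c' i)"
    using assms(2) unfolding graded_ge_def by blast
  define T where "T = {i. c i \<noteq> 0} \<union> {i. c' i \<noteq> 0}"
  have T: "finite T"
    unfolding T_def using c(2) c'(2) by simp
  have "a = (\<Sum>i\<in>T. c i)" "b = (\<Sum>i\<in>T. c' i)"
    unfolding a b using T by (auto simp: T_def intro: sum.mono_neutral_left)
  moreover have "(\<Sum>i | c i + c' i \<noteq> 0. c i + c' i) = (\<Sum>i\<in>T. c i + c' i)"
    using T by (intro sum.mono_neutral_left) (auto simp: T_def)
  moreover have "finite {i. c i + c' i \<noteq> 0}"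
    using T by (rule finite_subset[rotated]) (auto simp: T_def)
  ultimately show ?thesis
    unfolding graded_ge_def using c c'
    by (intro CollectI exI[of _ "\<lambda>i. c i + c' i"]) (auto intro: add_mem simp: sum.distrib)
qed

lemma graded_ge_sum:
  "finite S \<Longrightarrow> (\<And>j. j \<in> S \<Longrightarrow> t j \<in> graded_ge G m) \<Longrightarrow> sum t S \<in> graded_ge G m"
  by (induction S rule: finite_induct) (auto intro: graded_ge_zero graded_ge_add)

lemma graded_ge_mult:
  assumes a: "a \<in> graded_ge G m" and b: "b \<in> graded_ge G m'"
  shows "a * b \<in> graded_ge G (m + m')"
  using a
proof (induction rule: graded_ge_induct)
  case zero
  show ?case by (simp add: graded_ge_zero)
next
  case (homogeneous g i)
  from b show ?case
  proof (induction rule: graded_ge_induct)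
    case zero
    show ?case by (simp add: graded_ge_zero)
  next
    case (homogeneous h j)
    then show ?case
      using \<open>g \<in> G i\<close> \<open>m \<le> i\<close> by (auto intro: homogeneous_mem_graded_ge mult_mem)
  next
    case (add h h')
    then show ?case by (simp add: distrib_left graded_ge_add)
  qed
next
  case (add a a')
  then show ?case by (simp add: distrib_right graded_ge_add)
qed

lemma ideal_pow_graded_ge_subset: "ideal_pow (graded_ge G m) p \<subseteq> graded_ge G (p * m)"
proof
  fix a
  assume "a \<in> ideal_pow (graded_ge G m) p"
  then obtain M :: nat and f where a: "a = (\<Sum>j<M. \<Prod>i<p. f j i)"
    and f: "\<forall>j<M. \<forall>i<p. f j i \<in> graded_ge G m"
    unfolding ideal_pow_def by blast
  have "(\<Prod>i<q. f j i) \<in> graded_ge G (q * m)" if "j < M" "q \<le> p" for j q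
    using that(2)
  proof (induction q)
    case 0
    show ?case by (simp add: homogeneous_mem_graded_ge[OF one_mem])
  next
    case (Suc q)
    then show ?case
      using f that(1) graded_ge_mult[of "\<Prod>i<q. f j i" "q * m" "f j q" m]
      by (simp add: mult.commute add.commute)
  qed
  then show "a \<in> graded_ge G (p * m)"
    unfolding a by (auto intro: graded_ge_sum)
qed

lemma ideal_pow_1_graded_ge: "ideal_pow (graded_ge G m) 1 = graded_ge G m"
  using ideal_pow_graded_ge_subset[of m 1] subset_ideal_pow_1 by auto

end

text \<open>Write w = u_i \<omega>_i and e_i = q_i u_i + r_i with r_i < u_i.  Then e contains
  \<Sum> q_i disjoint blocks, each equal to u_i in one coordinate i and so of weighted degree w,
  while its weighted degree is at most (\<Sum> q_i + n) w - n; so the hypothesis leaves at least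
  K blocks.\<close>

lemma exists_sub_exponent_of_degree:
  fixes \<omega> e :: "nat \<Rightarrow> nat"
  assumes "\<And>i. i < n \<Longrightarrow> 0 < \<omega> i" and "\<And>i. i < n \<Longrightarrow> \<omega> i dvd w" and "0 < w"
    and "(K + n) * w < (\<Sum>i<n. e i * \<omega> i) + n + w"
  shows "\<exists>e'. (\<forall>i<n. e' i \<le> e i) \<and> (\<Sum>i<n. e' i * \<omega> i) = K * w"
  using assms
proof (induction n arbitrary: K)
  case 0
  then show ?case by simp
next
  case (Suc n)
  obtain u where w: "w = u * \<omega> n"
    using Suc.prems(2) by (metis dvd_def lessI mult.commute)
  define q where "q = e n div u"
  define r where "r = e n mod u"
  have e_n: "e n = q * u + r"
    by (simp add: q_def r_def)
  have "r < u"
    using w \<open>0 < w\<close> by (simp add: r_def)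
  then have "(r + 1) * \<omega> n \<le> w"
    unfolding w by (intro mult_le_mono1) simp
  then have block_bound: "e n * \<omega> n + \<omega> n \<le> q * w + w"
    unfolding e_n w by (simp add: algebra_simps)
  show ?case
  proof (cases "K \<le> q")
    case True
    then have "K * u \<le> e n"
      using mult_le_mono1[of K q u] unfolding e_n by linarith
    then show ?thesis
      using w by (intro exI[of _ "(\<lambda>_. 0)(n := K * u)"]) (simp add: less_Suc_eq)
  next
    case False
    have "K + Suc n = (K - q + n) + q + 1"
      using False by simp
    then have "(K - q + n) * w + q * w + w < (\<Sum>i<n. e i * \<omega> i) + e n * \<omega> n + Suc n + w"
      using Suc.prems(4) by (simp only: add_mult_distrib mult_1 sum.lessThan_Suc)
    then have "(K - q + n) * w < (\<Sum>i<n. e i * \<omega> i) + n + w"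
      using block_bound Suc.prems(1)[of n] by linarith
    then obtain e' where e': "\<forall>i<n. e' i \<le> e i" "(\<Sum>i<n. e' i * \<omega> i) = (K - q) * w"
      using Suc.IH[where K = "K - q", OF _ _ \<open>0 < w\<close>] Suc.prems(1,2) by (simp; blast)
    have "q * u \<le> e n"
      unfolding e_n by simp
    then have "\<forall>i<Suc n. (e'(n := q * u)) i \<le> e i"
      using e'(1) by (simp add: less_Suc_eq)
    moreover have "(\<Sum>i<Suc n. (e'(n := q * u)) i * \<omega> i) = K * w"
      using e'(2) False w by (simp add: diff_mult_distrib)
    ultimately show ?thesis
      by blast
  qed
qed

locale graded_generators = graded +
  fixes n :: nat and x :: "nat \<Rightarrow> 'a::comm_ring_1" and \<omega> :: "nat \<Rightarrow> nat"
  assumes weight_pos: "\<And>i. i < n \<Longrightarrow> 0 < \<omega> i"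
    and generator_mem: "\<And>i. i < n \<Longrightarrow> x i \<in> G (\<omega> i)"
    and generated: "generated_by G n x"
begin

definition monomial :: "(nat \<Rightarrow> nat) \<Rightarrow> 'a" where
  "monomial e = (\<Prod>i<n. x i ^ e i)"

definition weighted_degree :: "(nat \<Rightarrow> nat) \<Rightarrow> nat" where
  "weighted_degree e = (\<Sum>i<n. e i * \<omega> i)"

lemma monomial_mem: "monomial e \<in> G (weighted_degree e)"
  unfolding monomial_def weighted_degree_def
  by (rule prod_mem) (simp_all add: power_mem generator_mem)

lemma monomial_split:
  assumes "\<And>i. i < n \<Longrightarrow> e' i \<le> e i"
  shows "monomial e = monomial e' * monomial (\<lambda>i. e i - e' i)"
    and "weighted_degree e = weighted_degree e' + weighted_degree (\<lambda>i. e i - e' i)"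
proof -
  show "monomial e = monomial e' * monomial (\<lambda>i. e i - e' i)"
    unfolding monomial_def prod.distrib[symmetric]
    by (rule prod.cong) (simp_all add: assms flip: power_add)
  show "weighted_degree e = weighted_degree e' + weighted_degree (\<lambda>i. e i - e' i)"
    unfolding weighted_degree_def sum.distrib[symmetric]
    by (rule sum.cong) (simp_all add: assms flip: add_mult_distrib)
qed

lemma homogeneous_monomial_expansion:
  assumes "g \<in> G d"
  obtains S :: "nat set" and c e where "finite S" and "\<And>j. j \<in> S \<Longrightarrow> c j \<in> G 0"
    and "\<And>j. j \<in> S \<Longrightarrow> weighted_degree (e j) = d"
    and "g = (\<Sum>j\<in>S. c j * monomial (e j))"
proof -
  obtain m :: nat and c e where c: "\<forall>j<m. c j \<in> G 0"
    and g: "g = (\<Sum>j<m. c j * monomial (e j))"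
    using generated unfolding generated_by_def monomial_def by blast
  have "c j * monomial (e j) \<in> G (weighted_degree (e j))" if "j \<in> {..<m}" for j
    using mult_mem[OF _ monomial_mem, of "c j" 0 "e j"] c that by simp
  then have "g = (\<Sum>j\<in>{j \<in> {..<m}. weighted_degree (e j) = d}. c j * monomial (e j))"
    by (rule homogeneous_component_of_sum[OF finite_lessThan _ assms g])
  then show thesis
    by (rule that[rotated -1]) (use c in auto)
qed

lemma scaled_monomial_mem_ideal_pow_Suc:
  assumes "0 < w" and "\<And>i. i < n \<Longrightarrow> \<omega> i dvd w" and "n \<le> p * k + 1"
    and pow_p: "ideal_pow (graded_ge G (k * w)) p = graded_ge G (p * k * w)"
    and c: "c \<in> G 0" and deg: "Suc p * k * w \<le> weighted_degree e"
  shows "c * monomial e \<in> ideal_pow (graded_ge G (k * w)) (Suc p)"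
proof -
  define D where "D = weighted_degree e"
  have "n * w \<le> p * k * w + w"
    using mult_le_mono1[OF \<open>n \<le> p * k + 1\<close>, of w] by (simp add: add_mult_distrib)
  moreover have "k * w + p * k * w \<le> D"
    using deg by (simp add: D_def add_mult_distrib)
  ultimately have "(k + n) * w < D + n + w"
    using \<open>0 < w\<close> by (cases "n = 0") (simp_all add: add_mult_distrib)
  then obtain e' where e': "\<forall>i<n. e' i \<le> e i" "weighted_degree e' = k * w"
    using exists_sub_exponent_of_degree[of n \<omega> w] weight_pos assms(1,2)
    unfolding D_def weighted_degree_def by blast
  define e'' where "e'' = (\<lambda>i. e i - e' i)"
  have "monomial e' \<in> graded_ge G (k * w)"
    using monomial_mem[of e'] e'(2) by (simp add: homogeneous_mem_graded_ge)
  moreover have "c * monomial e'' \<in> ideal_pow (graded_ge G (k * w)) p"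
  proof -
    have "c * monomial e'' \<in> G (weighted_degree e'')"
      using mult_mem[OF c monomial_mem] by simp
    moreover have "p * k * w \<le> weighted_degree e''"
      using monomial_split(2)[of e' e] e' deg by (simp add: e''_def add_mult_distrib)
    ultimately show ?thesis
      using pow_p by (simp add: homogeneous_mem_graded_ge)
  qed
  ultimately have "monomial e' * (c * monomial e'') \<in> ideal_pow (graded_ge G (k * w)) (Suc p)"
    by (rule ideal_pow_mult)
  then show ?thesis
    using monomial_split(1)[of e' e] e'(1) by (simp add: e''_def mult.left_commute)
qed

lemma ideal_pow_graded_ge_Suc:
  assumes "0 < w" and "\<And>i. i < n \<Longrightarrow> \<omega> i dvd w" and "n \<le> p * k + 1"
    and pow_p: "ideal_pow (graded_ge G (k * w)) p = graded_ge G (p * k * w)"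
  shows "ideal_pow (graded_ge G (k * w)) (Suc p) = graded_ge G (Suc p * k * w)"
proof
  show "ideal_pow (graded_ge G (k * w)) (Suc p) \<subseteq> graded_ge G (Suc p * k * w)"
    using ideal_pow_graded_ge_subset[of "k * w" "Suc p"] by (simp only: mult.assoc)
  show "graded_ge G (Suc p * k * w) \<subseteq> ideal_pow (graded_ge G (k * w)) (Suc p)"
  proof
    fix a
    assume "a \<in> graded_ge G (Suc p * k * w)"
    then show "a \<in> ideal_pow (graded_ge G (k * w)) (Suc p)"
    proof (induction rule: graded_ge_induct)
      case zero
      show ?case by (rule ideal_pow_zero)
    next
      case (homogeneous g d)
      obtain S :: "nat set" and c e where "finite S" "\<And>j. j \<in> S \<Longrightarrow> c j \<in> G 0"
        "\<And>j. j \<in> S \<Longrightarrow> weighted_degree (e j) = d" "g = (\<Sum>j\<in>S. c j * monomial (e j))"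
        using homogeneous_monomial_expansion[OF homogeneous(1)] by blast
      with homogeneous(2) show ?case
        by (auto intro!: ideal_pow_sum scaled_monomial_mem_ideal_pow_Suc[OF assms])
    next
      case (add a b)
      then show ?case by (rule ideal_pow_add)
    qed
  qed
qed

text \<open>The condition (p - 1) k + 2 \<le> n is the integer form of p \<le> (n - 2) / k + 1.\<close>

lemma ideal_pow_graded_ge_all:
  assumes "0 < w" and "\<And>i. i < n \<Longrightarrow> \<omega> i dvd w"
    and small: "\<And>p. 2 \<le> p \<Longrightarrow> (p - 1) * k + 2 \<le> n \<Longrightarrow>
      ideal_pow (graded_ge G (k * w)) p = graded_ge G (p * k * w)"
    and "1 \<le> p"
  shows "ideal_pow (graded_ge G (k * w)) p = graded_ge G (p * k * w)"
  using \<open>1 \<le> p\<close>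
proof (induction p rule: dec_induct)
  case base
  show ?case using ideal_pow_1_graded_ge[of "k * w"] by simp
next
  case (step q)
  show ?case
  proof (cases "q * k + 2 \<le> n")
    case True
    then show ?thesis using small[of "Suc q"] step(1) by simp
  next
    case False
    then show ?thesis using ideal_pow_graded_ge_Suc[OF assms(1,2) _ step(3)] by simp
  qed
qed

end

lemma real_bound_of_nat_bound:
  fixes k n p :: nat
  assumes "0 < k" and "1 \<le> p" and "(p - 1) * k + 2 \<le> n"
  shows "real p \<le> (real n - 2) / real k + 1"
proof -
  have "real ((p - 1) * k + 2) \<le> real n"
    using assms(3) by (simp only: of_nat_le_iff)
  then have "(real p - 1) * real k + 2 \<le> real n"
    using assms(2) by (simp add: of_nat_diff)
  then show ?thesis
    using assms(1) by (simp add: field_simps)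
qed

theorem lemma3p5:
  fixes G :: "nat \<Rightarrow> 'a::comm_ring_1 set"
    and n :: nat and x :: "nat \<Rightarrow> 'a" and \<omega> :: "nat \<Rightarrow> nat" and k :: nat
  assumes "graded_ring G"
    and "\<forall>i<n. 0 < \<omega> i \<and> x i \<in> G (\<omega> i)"
    and "generated_by G n x"
    and "0 < k"
  defines "w \<equiv> Lcm (\<omega> ` {..<n})"
  defines "I \<equiv> graded_ge G (k * w)"
  shows "((\<forall>p::nat. 1 \<le> p \<and> real p \<le> (real n - 2) / real k + 1 \<longrightarrow>
              ideal_pow I p = graded_ge G (p * k * w)) \<longrightarrow>
          (\<forall>p::nat. 1 \<le> p \<longrightarrow> ideal_pow I p = graded_ge G (p * k * w)))
       \<and> (int k \<ge> int n - 1 \<longrightarrow>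
          (\<forall>p::nat. 1 \<le> p \<longrightarrow> ideal_pow I p = graded_ge G (p * k * w)))"
proof -
  interpret graded_generators G n x \<omega>
    using assms(1-3) by unfold_locales auto
  have "0 \<notin> \<omega> ` {..<n}"
    using weight_pos by fastforce
  then have "0 < w"
    unfolding w_def by (metis Lcm_0_iff finite_imageI finite_lessThan gr0I)
  have dvd: "\<And>i. i < n \<Longrightarrow> \<omega> i dvd w"
    unfolding w_def by (simp add: dvd_Lcm)
  have pow_all: "ideal_pow I p = graded_ge G (p * k * w)"
    if "\<And>q. 2 \<le> q \<Longrightarrow> (q - 1) * k + 2 \<le> n \<Longrightarrow> ideal_pow I q = graded_ge G (q * k * w)"
      and "1 \<le> p" for p
    using ideal_pow_graded_ge_all[OF \<open>0 < w\<close> dvd that(1)[unfolded I_def] that(2)]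
    unfolding I_def .
  show ?thesis
  proof (intro conjI impI allI)
    fix p :: nat
    assume "\<forall>p::nat. 1 \<le> p \<and> real p \<le> (real n - 2) / real k + 1 \<longrightarrow>
      ideal_pow I p = graded_ge G (p * k * w)" and "1 \<le> p"
    then show "ideal_pow I p = graded_ge G (p * k * w)"
      using real_bound_of_nat_bound[OF \<open>0 < k\<close>] pow_all[of p] by simp
  next
    fix p :: nat
    assume "int n - 1 \<le> int k" and "1 \<le> p"
    show "ideal_pow I p = graded_ge G (p * k * w)"
    proof (rule pow_all)
      fix q :: nat
      assume "2 \<le> q" and "(q - 1) * k + 2 \<le> n"
      with \<open>int n - 1 \<le> int k\<close> show "ideal_pow I q = graded_ge G (q * k * w)"
        using mult_le_mono1[of 1 "q - 1" k] by linarith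
    qed fact
  qed
qed

end
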